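(* Let $n\ge1$. For every $f\in L^2([0,1]^n)$ and every $k\in\{1,\ldots,n\}$, $I(f^d,k)=I(f,n-k+1)$. In particular, if $f$ is self-dual, then $I(f,k)=I(f,n-k+1)$.
   Context: $L^2([0,1]^n)$ is the space of square integrable real functions on $[0,1]^n$ modulo equality almost everywhere. For $\mathbf{x}\in[0,1]^n$, $x_{(1)}\le\cdots\le x_{(n)}$ are its coordinates in ascending order, with $x_{(0)}=0$, $x_{(n+1)}=1$. The influence index is $I(f,k)=-(n+1)(n+2)\int_{[0,1]^n}f(\mathbf{x})\,\big(x_{(k+1)}-2x_{(k)}+x_{(k-1)}\big)\,d\mathbf{x}$. The dual of $f$ is $f^d(\mathbf{x})=1-f(\mathbf{1}-\mathbf{x})$, where $\mathbf{1}=(1,\ldots,1)$; $f$ is self-dual if $f^d=f$. *)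

theory Defs
  imports "HOL-Analysis.Analysis"
begin

text \<open>Points of [0,1]^n are functions nat => real, extensional on {..<n}
  (coordinates indexed 0..n-1). The measure is the product of Lebesgue
  measure on [0,1], i.e. Lebesgue measure on the cube.\<close>

definition cube_measure :: "nat \<Rightarrow> (nat \<Rightarrow> real) measure" where
  "cube_measure n = PiM {..<n} (\<lambda>_. restrict_space lborel {0..1})"

definition ord_stat :: "nat \<Rightarrow> (nat \<Rightarrow> real) \<Rightarrow> nat \<Rightarrow> real" where
  "ord_stat n x k =
     (if k = 0 then 0 else if k \<le> n then sort (map x [0..<n]) ! (k - 1) else 1)"

definition square_integrable_cube :: "nat \<Rightarrow> ((nat \<Rightarrow> real) \<Rightarrow> real) \<Rightarrow> bool" where
  "square_integrable_cube n f \<longleftrightarrow>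
     f \<in> borel_measurable (cube_measure n) \<and> integrable (cube_measure n) (\<lambda>x. (f x)\<^sup>2)"

definition influence :: "nat \<Rightarrow> ((nat \<Rightarrow> real) \<Rightarrow> real) \<Rightarrow> nat \<Rightarrow> real" where
  "influence n f k =
     - (real n + 1) * (real n + 2) *
       (\<integral>x. f x * (ord_stat n x (k + 1) - 2 * ord_stat n x k + ord_stat n x (k - 1))
          \<partial>cube_measure n)"

definition dual_fun :: "nat \<Rightarrow> ((nat \<Rightarrow> real) \<Rightarrow> real) \<Rightarrow> (nat \<Rightarrow> real) \<Rightarrow> real" where
  "dual_fun n f x = 1 - f (\<lambda>i\<in>{..<n}. 1 - x i)"

text \<open>Self-duality as equality in L^2, i.e. almost everywhere on the cube.\<close>
definition self_dual :: "nat \<Rightarrow> ((nat \<Rightarrow> real) \<Rightarrow> real) \<Rightarrow> bool" where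
  "self_dual n f \<longleftrightarrow> (AE x in cube_measure n. dual_fun n f x = f x)"

end

theory Submission
  imports Defs "HOL-Probability.Infinite_Product_Measure"
begin

text \<open>
  The reflection x \<mapsto> 1 - x preserves the uniform measure on the cube and reverses the order
  statistics: the k-th order statistic of 1 - x is 1 - x_(n+1-k). Hence the second difference
  D_k = x_(k+1) - 2 x_(k) + x_(k-1) satisfies D_k(1 - x) = - D_(n-k+1)(x), and substituting turns
  \<integral> f^d D_k into \<integral> f D_(n-k+1) - \<integral> D_(n-k+1). The last integral vanishes because E x_(j) is
  linear in j: since x_(j) > t iff fewer than j coordinates are \<le> t, Tonelli gives
  E x_(j) = \<Sum>_(m<j) \<integral>_[0,1] B_(n,m) with the Bernstein polynomials B_(n,m), and these all have the
  same integral.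
\<close>

lemma sort_map_one_minus:
  fixes xs :: "real list"
  shows "sort (map (\<lambda>v. 1 - v) xs) = map (\<lambda>v. 1 - v) (rev (sort xs))"
proof (rule properties_for_sort)
  show "mset (map (\<lambda>v. 1 - v) (rev (sort xs))) = mset (map (\<lambda>v. 1 - v) xs)"
    by (simp add: mset_map)
  show "sorted (map (\<lambda>v. 1 - v) (rev (sort xs)))"
    by (simp add: sorted_map sorted_wrt_rev)
qed

definition reflect :: "nat \<Rightarrow> (nat \<Rightarrow> real) \<Rightarrow> nat \<Rightarrow> real" where
  "reflect n x = (\<lambda>i\<in>{..<n}. 1 - x i)"

lemma dual_fun_eq_reflect: "dual_fun n f x = 1 - f (reflect n x)"
  unfolding dual_fun_def reflect_def ..

lemma ord_stat_reflect:
  assumes "j \<le> n + 1"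
  shows "ord_stat n (reflect n x) j = 1 - ord_stat n x (n + 1 - j)"
proof (cases "j = 0 \<or> j = n + 1")
  case True
  then show ?thesis using assms by (auto simp: ord_stat_def)
next
  case False
  then have j: "1 \<le> j" "j \<le> n" using assms by auto
  have reflected: "map (reflect n x) [0..<n] = map (\<lambda>v. 1 - v) (map x [0..<n])"
    by (simp add: reflect_def)
  have "ord_stat n (reflect n x) j = 1 - rev (sort (map x [0..<n])) ! (j - 1)"
    using j unfolding ord_stat_def reflected sort_map_one_minus by (simp add: rev_nth)
  also have "\<dots> = 1 - ord_stat n x (n + 1 - j)"
    using j by (simp add: rev_nth ord_stat_def)
  finally show ?thesis .
qed

lemma ord_stat_in_unit_interval:
  assumes "\<And>i. i < n \<Longrightarrow> x i \<in> {0..1}"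
  shows "ord_stat n x j \<in> {0..1}"
proof -
  have "sort (map x [0..<n]) ! (j - 1) \<in> x ` {0..<n}" if "1 \<le> j" "j \<le> n"
    using that nth_mem[of "j - 1" "sort (map x [0..<n])"] by auto
  then show ?thesis using assms unfolding ord_stat_def by auto
qed

section \<open>Order statistics through counting\<close>

definition count_le :: "nat \<Rightarrow> (nat \<Rightarrow> real) \<Rightarrow> real \<Rightarrow> nat" where
  "count_le n x t = card {i\<in>{..<n}. x i \<le> t}"

lemma count_le_le: "count_le n x t \<le> n"
  unfolding count_le_def by (metis (no_types, lifting) card_lessThan card_mono finite_lessThan mem_Collect_eq subsetI)

lemma real_count_le_eq_sum: "real (count_le n x t) = (\<Sum>i<n. if x i \<le> t then 1 else 0)"
proof -
  have "{i\<in>{..<n}. x i \<le> t} = {..<n} \<inter> {i. x i \<le> t}" by auto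
  then show ?thesis unfolding count_le_def by (simp add: sum.If_cases)
qed

lemma count_le_eq_card_sort:
  "count_le n x t = card {i. i < n \<and> sort (map x [0..<n]) ! i \<le> t}"
proof -
  have "count_le n x t = length (filter (\<lambda>i. x i \<le> t) [0..<n])"
    unfolding count_le_def
    by (subst distinct_length_filter) (auto intro: arg_cong[where f = card])
  also have "\<dots> = length (filter (\<lambda>v. v \<le> t) (map x [0..<n]))"
    by (simp add: filter_map comp_def)
  also have "\<dots> = length (filter (\<lambda>v. v \<le> t) (sort (map x [0..<n])))"
    by (metis mset_filter mset_sort size_mset)
  finally show ?thesis by (simp add: length_filter_conv_card)
qed

lemma sorted_nth_le_iff:
  fixes ys :: "'a::linorder list"
  assumes "sorted ys" "1 \<le> j" "j \<le> length ys"
  shows "ys ! (j - 1) \<le> t \<longleftrightarrow> j \<le> card {i. i < length ys \<and> ys ! i \<le> t}"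
proof
  assume "ys ! (j - 1) \<le> t"
  moreover have "ys ! i \<le> ys ! (j - 1)" if "i < j" for i
    using that assms by (intro sorted_nth_mono) auto
  ultimately have "ys ! i \<le> t" if "i < j" for i
    using that by (meson order_trans)
  then have "{..<j} \<subseteq> {i. i < length ys \<and> ys ! i \<le> t}"
    using assms by auto
  then show "j \<le> card {i. i < length ys \<and> ys ! i \<le> t}"
    using card_mono[of "{i. i < length ys \<and> ys ! i \<le> t}" "{..<j}"] by simp
next
  assume j: "j \<le> card {i. i < length ys \<and> ys ! i \<le> t}"
  show "ys ! (j - 1) \<le> t"
  proof (rule ccontr)
    assume large: "\<not> ys ! (j - 1) \<le> t"
    have "i < j - 1" if "i < length ys" "ys ! i \<le> t" for i
    proof (rule ccontr)
      assume "\<not> i < j - 1"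
      then have "ys ! (j - 1) \<le> ys ! i" using that assms by (intro sorted_nth_mono) auto
      then show False using that large by auto
    qed
    then have "{i. i < length ys \<and> ys ! i \<le> t} \<subseteq> {..<j - 1}" by auto
    then have "card {i. i < length ys \<and> ys ! i \<le> t} \<le> j - 1"
      by (metis card_lessThan card_mono finite_lessThan)
    then show False using j assms by auto
  qed
qed

lemma ord_stat_le_iff:
  assumes "1 \<le> j" "j \<le> n"
  shows "ord_stat n x j \<le> t \<longleftrightarrow> j \<le> count_le n x t"
  using assms sorted_nth_le_iff[of "sort (map x [0..<n])" j t]
  by (simp add: ord_stat_def count_le_eq_card_sort)

abbreviation unit_lborel :: "real measure" where
  "unit_lborel \<equiv> restrict_space lborel {0..1}"

lemma prob_space_unit_lborel: "prob_space unit_lborel"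
  by (rule prob_spaceI) (simp add: space_restrict_space emeasure_restrict_space)

lemma prob_space_cube_measure: "prob_space (cube_measure n)"
  unfolding cube_measure_def by (rule prob_space_PiM) (rule prob_space_unit_lborel)

lemma space_cube_measure: "space (cube_measure n) = PiE {..<n} (\<lambda>_. {0..1})"
  unfolding cube_measure_def by (simp add: space_PiM space_restrict_space)

lemma ord_stat_in_unit_interval_on_cube:
  assumes "x \<in> space (cube_measure n)"
  shows "ord_stat n x j \<in> {0..1}"
  using assms unfolding space_cube_measure
  by (intro ord_stat_in_unit_interval) (simp add: PiE_iff)

lemma measurable_coordinate:
  assumes "i < n"
  shows "(\<lambda>x. x i) \<in> borel_measurable (cube_measure n)"
proof -
  have "(\<lambda>t. t) \<in> borel_measurable unit_lborel"
    by (rule measurable_restrict_space1) simp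
  then show ?thesis
    unfolding cube_measure_def using assms
    by (intro measurable_compose[OF measurable_component_singleton]) auto
qed

lemma measurable_count_le [measurable]:
  "(\<lambda>x. real (count_le n x t)) \<in> borel_measurable (cube_measure n)"
  unfolding real_count_le_eq_sum
proof (rule borel_measurable_sum)
  fix i assume "i \<in> {..<n}"
  then have [measurable]: "(\<lambda>x. x i) \<in> borel_measurable (cube_measure n)"
    by (simp add: measurable_coordinate)
  show "(\<lambda>x. if x i \<le> t then 1 else 0 :: real) \<in> borel_measurable (cube_measure n)"
    by measurable
qed

lemma measurable_ord_stat [measurable]:
  "(\<lambda>x. ord_stat n x j) \<in> borel_measurable (cube_measure n)"
proof (cases "1 \<le> j \<and> j \<le> n")
  case False
  then have "(\<lambda>x. ord_stat n x j) = (\<lambda>x. if j = 0 then 0 else 1)"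
    by (auto simp: ord_stat_def fun_eq_iff)
  then show ?thesis by simp
next
  case True
  have "{x \<in> space (cube_measure n). ord_stat n x j \<le> a} =
        {x \<in> space (cube_measure n). real j \<le> real (count_le n x a)}" for a
    using True by (auto simp: ord_stat_le_iff)
  then show ?thesis
    by (intro borel_measurable_iff_le[THEN iffD2] allI) (simp only: pred_def[symmetric], measurable)
qed

lemma integrable_ord_stat: "integrable (cube_measure n) (\<lambda>x. ord_stat n x j)"
proof -
  interpret prob_space "cube_measure n" by (rule prob_space_cube_measure)
  show ?thesis
    by (rule integrable_const_bound[where B = 1])
       (auto intro!: AE_I2 dest: ord_stat_in_unit_interval_on_cube[where j = j])
qed

section \<open>Invariance of the cube measure under reflection\<close>

lemma measurable_one_minus_unit_lborel: "(\<lambda>t::real. 1 - t) \<in> unit_lborel \<rightarrow>\<^sub>M unit_lborel"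
  by (rule measurable_restrict_space3) auto

lemma distr_lborel_one_minus: "distr lborel borel (\<lambda>x::real. 1 - x) = lborel"
  using lborel_real_affine[of "-1" 1] by (simp add: density_1)

lemma distr_unit_lborel_one_minus: "distr unit_lborel unit_lborel (\<lambda>t. 1 - t) = unit_lborel"
proof (rule measure_eqI)
  fix A assume "A \<in> sets (distr unit_lborel unit_lborel (\<lambda>t. 1 - t))"
  then have A: "A \<in> sets unit_lborel" "A \<subseteq> {0..1}" "A \<in> sets lborel"
    using sets_restrict_space_iff[of "{0..1::real}" lborel A] by auto
  have preimage: "(\<lambda>t. 1 - t) -` A \<inter> space unit_lborel = (\<lambda>t::real. 1 - t) -` A"
    using A(2) by (force simp: space_restrict_space)
  have preimage_sets: "(\<lambda>t::real. 1 - t) -` A \<in> sets lborel"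
    using measurable_sets_borel[of "\<lambda>t::real. 1 - t" lborel A] A(3) by simp
  have "emeasure (distr unit_lborel unit_lborel (\<lambda>t. 1 - t)) A =
        emeasure unit_lborel ((\<lambda>t. 1 - t) -` A \<inter> space unit_lborel)"
    by (rule emeasure_distr[OF measurable_one_minus_unit_lborel A(1)])
  also have "\<dots> = emeasure lborel ((\<lambda>t::real. 1 - t) -` A)"
    unfolding preimage using preimage preimage_sets
    by (intro emeasure_restrict_space) (auto simp: space_restrict_space)
  also have "\<dots> = emeasure (distr lborel borel (\<lambda>x::real. 1 - x)) A"
    using A by (subst emeasure_distr) auto
  also have "\<dots> = emeasure unit_lborel A"
    using A by (simp add: distr_lborel_one_minus emeasure_restrict_space)
  finally show "emeasure (distr unit_lborel unit_lborel (\<lambda>t. 1 - t)) A = emeasure unit_lborel A" .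
qed simp

lemma measurable_reflect: "reflect n \<in> cube_measure n \<rightarrow>\<^sub>M cube_measure n"
  unfolding reflect_def cube_measure_def
proof (rule measurable_restrict)
  fix i :: nat assume "i \<in> {..<n}"
  then show "(\<lambda>x. 1 - x i) \<in> PiM {..<n} (\<lambda>_. unit_lborel) \<rightarrow>\<^sub>M unit_lborel"
    using measurable_compose[OF measurable_component_singleton[of i "{..<n}" "\<lambda>_. unit_lborel"]
        measurable_one_minus_unit_lborel] by simp
qed

lemma distr_cube_measure_reflect: "distr (cube_measure n) (cube_measure n) (reflect n) = cube_measure n"
proof -
  have "product_prob_space (\<lambda>_. unit_lborel)"
    by (rule product_prob_spaceI) (rule prob_space_unit_lborel)
  then have "distr (cube_measure n) (cube_measure n) (compose {..<n} (\<lambda>t. 1 - t)) =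
      PiM {..<n} (\<lambda>i. distr unit_lborel unit_lborel (\<lambda>t. 1 - t))"
    unfolding cube_measure_def
    by (intro distr_PiM_finite_prob_space measurable_one_minus_unit_lborel) auto
  moreover have "compose {..<n} (\<lambda>t. 1 - t) = reflect n"
    by (simp add: fun_eq_iff compose_def reflect_def)
  ultimately show ?thesis
    by (simp add: distr_unit_lborel_one_minus cube_measure_def)
qed

lemma integral_reflect:
  fixes h :: "(nat \<Rightarrow> real) \<Rightarrow> real"
  assumes "h \<in> borel_measurable (cube_measure n)"
  shows "(\<integral>x. h (reflect n x) \<partial>cube_measure n) = (\<integral>x. h x \<partial>cube_measure n)"
  using integral_distr[OF measurable_reflect assms] by (simp add: distr_cube_measure_reflect)

section \<open>Expected order statistics\<close>

definition level_cell :: "nat \<Rightarrow> real \<Rightarrow> nat set \<Rightarrow> (nat \<Rightarrow> real) set" where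
  "level_cell n t S = PiE {..<n} (\<lambda>i. if i \<in> S then {0..t} else {t<..1})"

lemma mem_level_cell_iff:
  assumes "S \<subseteq> {..<n}" "t \<in> {0..1}"
  shows "x \<in> level_cell n t S \<longleftrightarrow> x \<in> space (cube_measure n) \<and> {i\<in>{..<n}. x i \<le> t} = S"
proof -
  have "x \<in> level_cell n t S \<longleftrightarrow>
        x \<in> extensional {..<n} \<and> (\<forall>i<n. x i \<in> (if i \<in> S then {0..t} else {t<..1}))"
    by (auto simp: level_cell_def PiE_iff)
  also have "\<dots> \<longleftrightarrow> x \<in> extensional {..<n} \<and> (\<forall>i<n. x i \<in> {0..1} \<and> (i \<in> S \<longleftrightarrow> x i \<le> t))"
  proof -
    have cell_coordinate:
      "v \<in> (if b then {0..t} else {t<..1}) \<longleftrightarrow> v \<in> {0..1} \<and> (b \<longleftrightarrow> v \<le> t)" for v b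
      using assms(2) by auto
    show ?thesis by (simp only: cell_coordinate)
  qed
  also have "\<dots> \<longleftrightarrow> x \<in> space (cube_measure n) \<and> {i\<in>{..<n}. x i \<le> t} = S"
  proof -
    have "x \<in> space (cube_measure n) \<longleftrightarrow> x \<in> extensional {..<n} \<and> (\<forall>i<n. x i \<in> {0..1})"
      by (auto simp: space_cube_measure PiE_iff)
    moreover have "{i\<in>{..<n}. x i \<le> t} = S \<longleftrightarrow> (\<forall>i<n. i \<in> S \<longleftrightarrow> x i \<le> t)"
      using assms(1) by blast
    ultimately show ?thesis by blast
  qed
  finally show ?thesis .
qed

lemma sets_level_cell:
  assumes "t \<in> {0..1}"
  shows "level_cell n t S \<in> sets (cube_measure n)"
  unfolding level_cell_def cube_measure_def
proof (rule sets_PiM_I_finite)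
  show "(if i \<in> S then {0..t} else {t<..1}) \<in> sets unit_lborel" for i
    using assms by (auto simp: sets_restrict_space_iff)
qed simp

lemma prod_if_eq_power:
  fixes t :: "'a::comm_ring_1"
  assumes "S \<subseteq> {..<n}"
  shows "(\<Prod>i<n. if i \<in> S then t else 1 - t) = t ^ card S * (1 - t) ^ (n - card S)"
proof -
  have "(\<Prod>i<n. if i \<in> S then t else 1 - t) =
        (\<Prod>i\<in>{..<n} \<inter> {i. i \<in> S}. t) * (\<Prod>i\<in>{..<n} \<inter> - {i. i \<in> S}. 1 - t)"
    by (rule prod.If_cases) simp
  moreover have "{..<n} \<inter> {i. i \<in> S} = S" "{..<n} \<inter> - {i. i \<in> S} = {..<n} - S"
    using assms by auto
  moreover have "card ({..<n} - S) = n - card S"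
    using assms by (simp add: card_Diff_subset finite_subset)
  ultimately show ?thesis by simp
qed

lemma emeasure_level_cell:
  assumes t: "t \<in> {0..1}" and S: "S \<subseteq> {..<n}"
  shows "emeasure (cube_measure n) (level_cell n t S) = ennreal (t ^ card S * (1 - t) ^ (n - card S))"
proof -
  interpret product_prob_space "\<lambda>_. unit_lborel"
    by (rule product_prob_spaceI) (rule prob_space_unit_lborel)
  have "emeasure (cube_measure n) (level_cell n t S) =
        (\<Prod>i<n. emeasure unit_lborel (if i \<in> S then {0..t} else {t<..1}))"
    unfolding level_cell_def cube_measure_def
    by (rule emeasure_PiM) (use t in \<open>auto simp: sets_restrict_space_iff\<close>)
  also have "\<dots> = (\<Prod>i<n. ennreal (if i \<in> S then t else 1 - t))"
  proof (intro prod.cong refl)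
    have "{0..t} \<subseteq> {0..1}" "{t<..1} \<subseteq> {0..1}" using t by auto
    then show "emeasure unit_lborel (if i \<in> S then {0..t} else {t<..1}) =
               ennreal (if i \<in> S then t else 1 - t)" for i
      using t by (simp add: emeasure_restrict_space)
  qed
  also have "\<dots> = ennreal (t ^ card S * (1 - t) ^ (n - card S))"
    using t by (simp add: prod_ennreal prod_if_eq_power[OF S])
  finally show ?thesis .
qed

lemma count_le_less_eq_UN_level_cell:
  assumes "t \<in> {0..1}"
  shows "{x\<in>space (cube_measure n). count_le n x t < j} =
         (\<Union>S\<in>{S. S \<subseteq> {..<n} \<and> card S < j}. level_cell n t S)"
proof (intro set_eqI iffI)
  fix x assume "x \<in> {x\<in>space (cube_measure n). count_le n x t < j}"
  then have x: "x \<in> space (cube_measure n)" "card {i\<in>{..<n}. x i \<le> t} < j"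
    unfolding count_le_def by auto
  then have "x \<in> level_cell n t {i\<in>{..<n}. x i \<le> t}"
    using mem_level_cell_iff[OF _ assms, of "{i\<in>{..<n}. x i \<le> t}" n x] by auto
  then show "x \<in> (\<Union>S\<in>{S. S \<subseteq> {..<n} \<and> card S < j}. level_cell n t S)"
    using x(2) by (intro UN_I[of "{i\<in>{..<n}. x i \<le> t}"]) auto
next
  fix x assume "x \<in> (\<Union>S\<in>{S. S \<subseteq> {..<n} \<and> card S < j}. level_cell n t S)"
  then obtain S where "S \<subseteq> {..<n}" "card S < j" "x \<in> level_cell n t S" by auto
  then show "x \<in> {x\<in>space (cube_measure n). count_le n x t < j}"
    using mem_level_cell_iff[OF _ assms, of S n x] unfolding count_le_def by auto
qed

lemma sum_subsets_card_less_eq_sum_Bernstein: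
  "(\<Sum>S\<in>{S. S \<subseteq> {..<n} \<and> card S < j}. t ^ card S * (1 - t) ^ (n - card S)) =
   (\<Sum>m<j. Bernstein n m t)"
proof -
  define F where "F = {S. S \<subseteq> {..<n} \<and> card S < j}"
  have "finite F" unfolding F_def by (rule finite_subset[of _ "Pow {..<n}"]) auto
  then have "(\<Sum>S\<in>F. t ^ card S * (1 - t) ^ (n - card S)) =
             (\<Sum>m<j. \<Sum>S\<in>{S. S \<in> F \<and> card S = m}. t ^ card S * (1 - t) ^ (n - card S))"
    by (intro sum.group[symmetric]) (auto simp: F_def)
  also have "\<dots> = (\<Sum>m<j. \<Sum>S\<in>{S. S \<subseteq> {..<n} \<and> card S = m}. t ^ m * (1 - t) ^ (n - m))"
  proof (rule sum.cong)
    fix m assume "m \<in> {..<j}"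
    then have "{S. S \<in> F \<and> card S = m} = {S. S \<subseteq> {..<n} \<and> card S = m}"
      unfolding F_def by auto
    then show "(\<Sum>S\<in>{S. S \<in> F \<and> card S = m}. t ^ card S * (1 - t) ^ (n - card S)) =
               (\<Sum>S\<in>{S. S \<subseteq> {..<n} \<and> card S = m}. t ^ m * (1 - t) ^ (n - m))"
      by (auto intro: sum.cong)
  qed simp
  also have "\<dots> = (\<Sum>m<j. Bernstein n m t)"
    by (simp add: n_subsets Bernstein_def mult.assoc)
  finally show ?thesis unfolding F_def .
qed

lemma emeasure_count_le_less:
  assumes t: "t \<in> {0..1}"
  shows "emeasure (cube_measure n) {x\<in>space (cube_measure n). count_le n x t < j} =
         ennreal (\<Sum>m<j. Bernstein n m t)"
proof -
  define F where "F = {S. S \<subseteq> {..<n} \<and> card S < j}"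
  have finite_F: "finite F" unfolding F_def by (rule finite_subset[of _ "Pow {..<n}"]) auto
  have "level_cell n t S \<inter> level_cell n t S' = {}" if "S \<in> F" "S' \<in> F" "S \<noteq> S'" for S S'
    using that mem_level_cell_iff[OF _ t, of S n] mem_level_cell_iff[OF _ t, of S' n]
    unfolding F_def by blast
  then have "disjoint_family_on (level_cell n t) F"
    unfolding disjoint_family_on_def by blast
  then have "emeasure (cube_measure n) {x\<in>space (cube_measure n). count_le n x t < j} =
        (\<Sum>S\<in>F. emeasure (cube_measure n) (level_cell n t S))"
    unfolding count_le_less_eq_UN_level_cell[OF t] F_def[symmetric]
    by (intro sum_emeasure[symmetric]) (use sets_level_cell[OF t] finite_F in auto)
  also have "\<dots> = (\<Sum>S\<in>F. ennreal (t ^ card S * (1 - t) ^ (n - card S)))"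
    by (rule sum.cong) (use emeasure_level_cell[OF t] in \<open>auto simp: F_def\<close>)
  also have "\<dots> = ennreal (\<Sum>S\<in>F. t ^ card S * (1 - t) ^ (n - card S))"
    by (rule sum_ennreal) (use t in auto)
  finally show ?thesis
    unfolding F_def sum_subsets_card_less_eq_sum_Bernstein .
qed

lemma emeasure_count_le_less_on_unit_interval:
  assumes x: "x \<in> space (cube_measure n)" and j: "j \<le> n + 1"
  shows "emeasure lborel {t\<in>{0..1}. count_le n x t < j} = ennreal (ord_stat n x j)"
proof -
  consider "j = 0" | "j = n + 1" | "1 \<le> j" "j \<le> n" using j by linarith
  then show ?thesis
  proof cases
    case 1
    then show ?thesis by (simp add: ord_stat_def)
  next
    case 2
    then have "{t\<in>{0..1}. count_le n x t < j} = {0..1}"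
      using count_le_le[of n x] by (auto simp: less_Suc_eq_le)
    then show ?thesis using 2 by (simp add: ord_stat_def)
  next
    case 3
    have unit: "ord_stat n x j \<in> {0..1}" using x by (rule ord_stat_in_unit_interval_on_cube)
    have "{t\<in>{0..1}. count_le n x t < j} = {0..<ord_stat n x j}"
    proof (intro set_eqI iffI)
      fix t assume "t \<in> {t\<in>{0..1}. count_le n x t < j}"
      then show "t \<in> {0..<ord_stat n x j}" using ord_stat_le_iff[OF 3, of x t] by auto
    next
      fix t assume "t \<in> {0..<ord_stat n x j}"
      then show "t \<in> {t\<in>{0..1}. count_le n x t < j}" using ord_stat_le_iff[OF 3, of x t] unit by auto
    qed
    then show ?thesis using unit by simp
  qed
qed

lemma measurable_count_le_pair [measurable]:
  "(\<lambda>p. real (count_le n (fst p) (snd p))) \<in> borel_measurable (cube_measure n \<Otimes>\<^sub>M lborel)"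
  unfolding real_count_le_eq_sum
proof (rule borel_measurable_sum)
  fix i assume "i \<in> {..<n}"
  then have [measurable]: "(\<lambda>x. x i) \<in> borel_measurable (cube_measure n)"
    by (simp add: measurable_coordinate)
  show "(\<lambda>p. if fst p i \<le> snd p then 1 else 0 :: real) \<in> borel_measurable (cube_measure n \<Otimes>\<^sub>M lborel)"
    by measurable
qed

lemma sets_count_le_less: "{x\<in>space (cube_measure n). count_le n x t < j} \<in> sets (cube_measure n)"
proof -
  have "{x \<in> space (cube_measure n). real (count_le n x t) < real j} \<in> sets (cube_measure n)"
    by measurable
  then show ?thesis by simp
qed

lemma sets_count_le_less_on_unit_interval: "{t\<in>{0..1}. count_le n x t < j} \<in> sets lborel"
proof -
  have [measurable]: "(\<lambda>t. real (count_le n x t)) \<in> borel_measurable lborel"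
    unfolding real_count_le_eq_sum by measurable
  have "{t \<in> space lborel. t \<in> {0..1} \<and> real (count_le n x t) < real j} \<in> sets lborel"
    by measurable
  then show ?thesis by simp
qed

text \<open>Tonelli for the indicator of {(x, t). 0 \<le> t \<le> 1 \<and> count_le n x t < j}: its sections in t
  are the intervals [0, x_(j)), its sections in x have Bernstein measure.\<close>

lemma nn_integral_ord_stat:
  assumes j: "j \<le> n + 1"
  shows "(\<integral>\<^sup>+x. ennreal (ord_stat n x j) \<partial>cube_measure n) =
         (\<integral>\<^sup>+t. ennreal (indicator {0..1} t * (\<Sum>m<j. Bernstein n m t)) \<partial>lborel)"
proof -
  define G where "G = (\<lambda>x t. if t \<in> {0..1} \<and> count_le n x t < j then 1 else 0 :: ennreal)"
  interpret M: prob_space "cube_measure n" by (rule prob_space_cube_measure)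
  interpret pair_sigma_finite "cube_measure n" lborel
    by (intro pair_sigma_finite.intro M.sigma_finite_measure_axioms lborel.sigma_finite_measure_axioms)
  have "(\<lambda>p. if snd p \<in> {0..1} \<and> real (count_le n (fst p) (snd p)) < real j then 1 else 0 :: ennreal)
          \<in> borel_measurable (cube_measure n \<Otimes>\<^sub>M lborel)" by measurable
  moreover have "case_prod G =
      (\<lambda>p. if snd p \<in> {0..1} \<and> real (count_le n (fst p) (snd p)) < real j then 1 else 0 :: ennreal)"
    by (simp add: G_def fun_eq_iff)
  ultimately have G_measurable: "case_prod G \<in> borel_measurable (cube_measure n \<Otimes>\<^sub>M lborel)" by simp
  have "(\<integral>\<^sup>+x. ennreal (ord_stat n x j) \<partial>cube_measure n) =
        (\<integral>\<^sup>+x. (\<integral>\<^sup>+t. G x t \<partial>lborel) \<partial>cube_measure n)"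
  proof (rule nn_integral_cong)
    fix x assume x: "x \<in> space (cube_measure n)"
    have "(\<integral>\<^sup>+t. G x t \<partial>lborel) = (\<integral>\<^sup>+t. indicator {t\<in>{0..1}. count_le n x t < j} t \<partial>lborel)"
      by (rule nn_integral_cong) (simp add: G_def indicator_def)
    then show "ennreal (ord_stat n x j) = (\<integral>\<^sup>+t. G x t \<partial>lborel)"
      by (simp only: nn_integral_indicator[OF sets_count_le_less_on_unit_interval] emeasure_count_le_less_on_unit_interval[OF x j])
  qed
  also have "\<dots> = (\<integral>\<^sup>+t. (\<integral>\<^sup>+x. G x t \<partial>cube_measure n) \<partial>lborel)"
    by (rule Fubini'[OF G_measurable, symmetric])
  also have "\<dots> = (\<integral>\<^sup>+t. ennreal (indicator {0..1} t * (\<Sum>m<j. Bernstein n m t)) \<partial>lborel)"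
  proof (rule nn_integral_cong)
    fix t :: real
    show "(\<integral>\<^sup>+x. G x t \<partial>cube_measure n) = ennreal (indicator {0..1} t * (\<Sum>m<j. Bernstein n m t))"
    proof (cases "t \<in> {0..1}")
      case True
      have "(\<integral>\<^sup>+x. G x t \<partial>cube_measure n) =
            (\<integral>\<^sup>+x. indicator {x\<in>space (cube_measure n). count_le n x t < j} x \<partial>cube_measure n)"
        by (rule nn_integral_cong) (use True in \<open>simp add: G_def indicator_def\<close>)
      also have "\<dots> = ennreal (\<Sum>m<j. Bernstein n m t)"
        by (simp only: nn_integral_indicator[OF sets_count_le_less] emeasure_count_le_less[OF True])
      finally show ?thesis using True by simp
    next
      case False
      then have "(\<lambda>x. G x t) = (\<lambda>x. 0)"
        unfolding G_def by (intro ext) (auto simp del: atLeastAtMost_iff)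
      then show ?thesis using False by simp
    qed
  qed
  finally show ?thesis .
qed

lemma integral_ord_stat:
  assumes j: "j \<le> n + 1"
  shows "(\<integral>x. ord_stat n x j \<partial>cube_measure n) = (\<Sum>m<j. integral {0..1} (Bernstein n m))"
proof -
  define g where "g = (\<lambda>t. \<Sum>m<j. Bernstein n m t)"
  have Bernstein_integrable: "Bernstein n m integrable_on {0..1}" for m
    unfolding Bernstein_def by (intro integrable_continuous_interval continuous_intros)
  have g_integral: "integral {0..1} g = (\<Sum>m<j. integral {0..1} (Bernstein n m))"
    unfolding g_def by (rule integral_sum) (simp_all add: Bernstein_integrable)
  have g_has_integral: "(g has_integral integral {0..1} g) {0..1}"
    unfolding g_def by (intro integrable_integral integrable_sum) (simp_all add: Bernstein_integrable)
  have indicator_eq: "(\<lambda>t. indicator {0..1} t * g t) = (\<lambda>t. if t \<in> {0..1} then g t else 0)"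
    by (auto simp: indicator_def fun_eq_iff)
  have "((\<lambda>t. indicator {0..1} t * g t) has_integral integral {0..1} g) UNIV"
    unfolding indicator_eq has_integral_restrict_UNIV by (rule g_has_integral)
  moreover have "(\<lambda>t. indicator {0..1} t * g t) \<in> borel_measurable borel"
    unfolding g_def Bernstein_def by measurable
  moreover have g_nonneg: "0 \<le> g t" if "t \<in> {0..1}" for t
    unfolding g_def using that by (simp add: sum_nonneg Bernstein_nonneg)
  then have "0 \<le> indicator {0..1} t * g t" for t
    by (simp add: indicator_def)
  ultimately have "(\<integral>\<^sup>+t. ennreal (indicator {0..1} t * g t) \<partial>lborel) = ennreal (integral {0..1} g)"
    by (intro nn_integral_has_integral_lborel)
  moreover have ord_stat_nonneg: "AE x in cube_measure n. 0 \<le> ord_stat n x j"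
    using ord_stat_in_unit_interval_on_cube[of _ n j] by (intro AE_I2) simp
  then have "(\<integral>\<^sup>+x. ennreal (ord_stat n x j) \<partial>cube_measure n) =
             ennreal (\<integral>x. ord_stat n x j \<partial>cube_measure n)"
    by (rule nn_integral_eq_integral[OF integrable_ord_stat])
  moreover have "0 \<le> (\<integral>x. ord_stat n x j \<partial>cube_measure n)"
    using ord_stat_nonneg by (rule integral_nonneg_AE)
  moreover have "0 \<le> integral {0..1} g"
    by (rule has_integral_nonneg[OF g_has_integral g_nonneg])
  ultimately show ?thesis
    using nn_integral_ord_stat[OF j] g_integral unfolding g_def by simp
qed

section \<open>Bernstein polynomials have equal integrals\<close>

lemma Suc_times_binomial_Suc_eq: "Suc k * (n choose Suc k) = (n - k) * (n choose k)"
proof (cases n)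
  case (Suc m)
  then show ?thesis
    using Suc_times_binomial_eq[of m k] binomial_absorb_comp[of n k] by simp
qed simp

text \<open>Integration by parts; the boundary term t^(k+1) (1 - t)^(b+1) vanishes at 0 and 1.\<close>

lemma integral_power_mult_one_minus_power_Suc:
  "real (Suc b) * integral {0..1} (\<lambda>t. t ^ Suc k * (1 - t) ^ b) =
   real (Suc k) * integral {0..1} (\<lambda>t. t ^ k * (1 - t) ^ Suc b)"
proof -
  define A where "A = (\<lambda>t::real. t ^ Suc k * (1 - t) ^ b)"
  define B where "B = (\<lambda>t::real. t ^ k * (1 - t) ^ Suc b)"
  define F where "F = (\<lambda>t::real. t ^ Suc k * (1 - t) ^ Suc b)"
  have "(F has_real_derivative (real (Suc k) * B t - real (Suc b) * A t)) (at t within {0..1})" for t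
    unfolding F_def A_def B_def by ((rule derivative_eq_intros refl | simp)+)
  then have "((\<lambda>t. real (Suc k) * B t - real (Suc b) * A t) has_integral F 1 - F 0) {0..1}"
    by (intro fundamental_theorem_of_calculus) (simp_all add: has_real_derivative_iff_has_vector_derivative)
  then have "integral {0..1} (\<lambda>t. real (Suc k) * B t - real (Suc b) * A t) = 0"
    by (simp add: F_def integral_unique)
  moreover have "A integrable_on {0..1}" "B integrable_on {0..1}"
    unfolding A_def B_def by (intro integrable_continuous_interval continuous_intros)+
  ultimately show ?thesis
    unfolding A_def[symmetric] B_def[symmetric]
    by (simp add: integral_diff integrable_on_cmult_left)
qed

lemma integral_Bernstein_Suc:
  assumes "k < n"
  shows "integral {0..1} (Bernstein n (Suc k)) = integral {0..1} (Bernstein n k)"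
proof -
  obtain b where n: "n = Suc (k + b)" using less_imp_Suc_add[OF assms] by blast
  have "Suc k * (n choose Suc k) = Suc b * (n choose k)"
    using Suc_times_binomial_Suc_eq[of k n] n by simp
  then have binomial: "real (Suc k) * real (n choose Suc k) = real (Suc b) * real (n choose k)"
    by (simp only: of_nat_mult[symmetric])
  have Bernstein_Suc: "Bernstein n (Suc k) = (\<lambda>t. real (n choose Suc k) * (t ^ Suc k * (1 - t) ^ b))"
    and Bernstein_k: "Bernstein n k = (\<lambda>t. real (n choose k) * (t ^ k * (1 - t) ^ Suc b))"
    unfolding Bernstein_def n by (simp_all add: fun_eq_iff)
  have "real (Suc b) * integral {0..1} (Bernstein n (Suc k)) =
        real (n choose Suc k) * (real (Suc b) * integral {0..1} (\<lambda>t. t ^ Suc k * (1 - t) ^ b))"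
    unfolding Bernstein_Suc by simp
  also have "\<dots> = (real (Suc k) * real (n choose Suc k)) * integral {0..1} (\<lambda>t. t ^ k * (1 - t) ^ Suc b)"
    by (simp only: integral_power_mult_one_minus_power_Suc mult_ac)
  also have "\<dots> = real (Suc b) * integral {0..1} (Bernstein n k)"
    unfolding binomial Bernstein_k by simp
  finally have "real (Suc b) * integral {0..1} (Bernstein n (Suc k)) =
                real (Suc b) * integral {0..1} (Bernstein n k)" .
  then show ?thesis by simp
qed

definition ord_stat_second_diff :: "nat \<Rightarrow> (nat \<Rightarrow> real) \<Rightarrow> nat \<Rightarrow> real" where
  "ord_stat_second_diff n x k = ord_stat n x (k + 1) - 2 * ord_stat n x k + ord_stat n x (k - 1)"

lemma influence_eq_second_diff:
  "influence n f k = - (real n + 1) * (real n + 2) * (\<integral>x. f x * ord_stat_second_diff n x k \<partial>cube_measure n)"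
  unfolding influence_def ord_stat_second_diff_def ..

lemma measurable_ord_stat_second_diff [measurable]:
  "(\<lambda>x. ord_stat_second_diff n x k) \<in> borel_measurable (cube_measure n)"
  unfolding ord_stat_second_diff_def by measurable

lemma integrable_ord_stat_second_diff: "integrable (cube_measure n) (\<lambda>x. ord_stat_second_diff n x k)"
  unfolding ord_stat_second_diff_def
  by (intro integrable_ord_stat Bochner_Integration.integrable_add Bochner_Integration.integrable_diff
      integrable_mult_right)

lemma abs_ord_stat_second_diff_le:
  "x \<in> space (cube_measure n) \<Longrightarrow> \<bar>ord_stat_second_diff n x k\<bar> \<le> 4"
  using ord_stat_in_unit_interval_on_cube[of x n] unfolding ord_stat_second_diff_def
  by (smt (verit) atLeastAtMost_iff)

lemma integrable_mult_ord_stat_second_diff: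
  assumes "square_integrable_cube n f"
  shows "integrable (cube_measure n) (\<lambda>x. f x * ord_stat_second_diff n x k)"
proof -
  interpret prob_space "cube_measure n" by (rule prob_space_cube_measure)
  have f_measurable [measurable]: "f \<in> borel_measurable (cube_measure n)"
    using assms unfolding square_integrable_cube_def by simp
  have "integrable (cube_measure n) f"
    using assms unfolding square_integrable_cube_def by (intro square_integrable_imp_integrable[of f]) auto
  show ?thesis
  proof (rule Bochner_Integration.integrable_bound[of _ "\<lambda>x. 4 * f x"])
    show "integrable (cube_measure n) (\<lambda>x. 4 * f x)"
      using \<open>integrable (cube_measure n) f\<close> by simp
    show "(\<lambda>x. f x * ord_stat_second_diff n x k) \<in> borel_measurable (cube_measure n)"
      by measurable
    show "AE x in cube_measure n. norm (f x * ord_stat_second_diff n x k) \<le> norm (4 * f x)"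
    proof (rule AE_I2)
      fix x assume "x \<in> space (cube_measure n)"
      then have "\<bar>f x\<bar> * \<bar>ord_stat_second_diff n x k\<bar> \<le> \<bar>f x\<bar> * 4"
        by (intro mult_left_mono abs_ord_stat_second_diff_le) simp_all
      then show "norm (f x * ord_stat_second_diff n x k) \<le> norm (4 * f x)"
        by (simp add: abs_mult)
    qed
  qed
qed

lemma integral_ord_stat_second_diff:
  assumes "1 \<le> k" "k \<le> n"
  shows "(\<integral>x. ord_stat_second_diff n x k \<partial>cube_measure n) = 0"
proof -
  obtain k' where k': "k = Suc k'" using assms by (cases k) auto
  define q where "q = (\<lambda>m. integral {0..1} (Bernstein n m))"
  have "(\<integral>x. ord_stat_second_diff n x k \<partial>cube_measure n) =
        (\<integral>x. ord_stat n x (k + 1) \<partial>cube_measure n) - 2 * (\<integral>x. ord_stat n x k \<partial>cube_measure n)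
        + (\<integral>x. ord_stat n x (k - 1) \<partial>cube_measure n)"
    unfolding ord_stat_second_diff_def
    by (simp add: integrable_ord_stat Bochner_Integration.integral_add Bochner_Integration.integral_diff
        Bochner_Integration.integrable_diff integrable_mult_right)
  also have "\<dots> = (\<Sum>m<k + 1. q m) - 2 * (\<Sum>m<k. q m) + (\<Sum>m<k - 1. q m)"
    unfolding q_def using assms by (simp add: integral_ord_stat)
  also have "\<dots> = q k - q k'" by (simp add: k')
  also have "\<dots> = 0" using assms by (simp add: q_def k' integral_Bernstein_Suc)
  finally show ?thesis .
qed

lemma ord_stat_second_diff_reflect:
  assumes "1 \<le> k" "k \<le> n"
  shows "ord_stat_second_diff n (reflect n x) k = - ord_stat_second_diff n x (n - k + 1)"
  using assms ord_stat_reflect[of "k + 1" n x] ord_stat_reflect[of k n x] ord_stat_reflect[of "k - 1" n x]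
  by (simp add: ord_stat_second_diff_def Suc_diff_le)

lemma influence_dual_fun:
  assumes f: "square_integrable_cube n f" and k: "1 \<le> k" "k \<le> n"
  shows "influence n (dual_fun n f) k = influence n f (n - k + 1)"
proof -
  define m where "m = n - k + 1"
  have m: "1 \<le> m" "m \<le> n" "n - m + 1 = k" using k by (auto simp: m_def)
  have [measurable]: "f \<in> borel_measurable (cube_measure n)"
    using f unfolding square_integrable_cube_def by simp
  define h where "h = (\<lambda>y. (f y - 1) * ord_stat_second_diff n y m)"
  have "dual_fun n f x * ord_stat_second_diff n x k = h (reflect n x)" for x
    using ord_stat_second_diff_reflect[OF m(1,2), of x] m(3)
    by (simp add: h_def dual_fun_eq_reflect algebra_simps)
  then have "(\<integral>x. dual_fun n f x * ord_stat_second_diff n x k \<partial>cube_measure n) =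
             (\<integral>x. h (reflect n x) \<partial>cube_measure n)"
    by simp
  also have "\<dots> = (\<integral>x. h x \<partial>cube_measure n)"
    by (rule integral_reflect) (simp add: h_def)
  also have "\<dots> = (\<integral>x. f x * ord_stat_second_diff n x m \<partial>cube_measure n) -
                  (\<integral>x. ord_stat_second_diff n x m \<partial>cube_measure n)"
    unfolding h_def left_diff_distrib mult_1
    by (rule Bochner_Integration.integral_diff[OF integrable_mult_ord_stat_second_diff[OF f]
        integrable_ord_stat_second_diff])
  finally show ?thesis
    using integral_ord_stat_second_diff[OF m(1,2)] by (simp add: influence_eq_second_diff m_def)
qed

lemma influence_cong_AE:
  assumes "f \<in> borel_measurable (cube_measure n)" "g \<in> borel_measurable (cube_measure n)"
    and "AE x in cube_measure n. f x = g x"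
  shows "influence n f k = influence n g k"
  unfolding influence_eq_second_diff using assms
  by (intro arg_cong[where f = "\<lambda>I. - (real n + 1) * (real n + 2) * I"] integral_cong_AE) auto

lemma measurable_dual_fun:
  "f \<in> borel_measurable (cube_measure n) \<Longrightarrow> dual_fun n f \<in> borel_measurable (cube_measure n)"
  unfolding dual_fun_eq_reflect[abs_def]
  by (intro borel_measurable_diff borel_measurable_const measurable_compose[OF measurable_reflect])

theorem proposition13:
  fixes n :: nat and f :: "(nat \<Rightarrow> real) \<Rightarrow> real"
  assumes "n \<ge> 1"
    and "square_integrable_cube n f"
  shows "(\<forall>k\<in>{1..n}. influence n (dual_fun n f) k = influence n f (n - k + 1)) \<and>
         (self_dual n f \<longrightarrow> (\<forall>k\<in>{1..n}. influence n f k = influence n f (n - k + 1)))"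
proof (intro conjI impI ballI)
  fix k assume "k \<in> {1..n}"
  then show "influence n (dual_fun n f) k = influence n f (n - k + 1)"
    using influence_dual_fun[OF assms(2)] by simp
next
  fix k assume "self_dual n f" "k \<in> {1..n}"
  have "f \<in> borel_measurable (cube_measure n)"
    using assms(2) unfolding square_integrable_cube_def by simp
  then have "influence n f k = influence n (dual_fun n f) k"
    using \<open>self_dual n f\<close> unfolding self_dual_def
    by (intro influence_cong_AE measurable_dual_fun) (auto elim: AE_mp)
  also have "\<dots> = influence n f (n - k + 1)"
    using \<open>k \<in> {1..n}\<close> influence_dual_fun[OF assms(2)] by simp
  finally show "influence n f k = influence n f (n - k + 1)" .
qed

end
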